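(* Assume $L/F$ is unramified and $n\ge1$. Then $\dim\pi_{\tau,\chi}^{K_n}\le q^a$, where $a=n$ if $c-n$ is even and $a=n-1$ if $c-n$ is odd.
   Context: $F$ is a $p$-adic field with $p\ne2$, ring of integers $\mathcal O$ with maximal ideal $\mathfrak p$, residue field of order $q$. $L/F$ is a quadratic extension with ring of integers $\mathcal O_L$, maximal ideal $\mathfrak p_L$, conjugation $x\mapsto\overline x$, norm $N:L\to F$, $L^1=\ker N$; $\omega$ is the nontrivial character of $F^\times/N(L^\times)$. $\chi$ is a character of $L^\times$ not factoring through $N$. $\tau$ is a nontrivial additive character of $F$ with conductor $\mathfrak p^c$, i.e. $\tau$ is trivial on $\mathfrak p^m$ iff $m\ge c$. Put $\langle x,y\rangle=\tau(\operatorname{tr}_{L/F}(xy))$ and $\widehat\Phi(x)=\int_L\Phi(y)\langle x,y\rangle\,dy$ for Schwartz functions $\Phi$ on $L$, with Haar measure normalized so that $\widehat{\widehat\Phi}(x)=\Phi(-x)$. $\mathcal S(L)_\chi$ is the space of Schwartz functions with $\Phi(xy)=\chi(y)^{-1}\Phi(x)$ for $y\in L^1$. $G_+=\{g\in GL_2(F):\det g\in N(L^\times)\}$, and $\pi_{\tau,\chi}$ is the irreducible representation of $G_+$ on $\mathcal S(L)_\chi$ satisfying $\pi_{\tau,\chi}\begin{pmatrix}1&u\\0&1\end{pmatrix}\Phi(x)=\tau(uN(x))\Phi(x)$, $\pi_{\tau,\chi}\begin{pmatrix}a&0\\0&a^{-1}\end{pmatrix}\Phi(x)=\omega(a)|a|_L^{1/2}\Phi(ax)$,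 $\pi_{\tau,\chi}\begin{pmatrix}0&1\\-1&0\end{pmatrix}\Phi(x)=\gamma\widehat\Phi(\overline x)$ for some complex $\gamma$ with $|\gamma|=1$. $K_n$ is the principal congruence subgroup of $GL_2(F)$ of level $n$ (contained in $G_+$ for $n\ge1$). *)

theory Defs
  imports Complex_Main
begin

text \<open>F is a field type 'f with a normalized discrete valuation v (the value at 0 is
irrelevant; membership in the ideals p^m treats 0 separately).\<close>

definition PF :: "('f::field \<Rightarrow> int) \<Rightarrow> int \<Rightarrow> 'f set" where
  "PF v m = {x. x = 0 \<or> m \<le> v x}"

definition OF :: "('f::field \<Rightarrow> int) \<Rightarrow> 'f set" where
  "OF v = PF v 0"

definition residue_classes :: "('f::field \<Rightarrow> int) \<Rightarrow> 'f set set" where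
  "residue_classes v = (\<lambda>x. {y \<in> OF v. x - y \<in> PF v 1}) ` OF v"

text \<open>p-adic field (finite extension of Q_p): characteristic 0, complete w.r.t. a
normalized discrete valuation, finite residue field of order q; residue characteristic
odd (p \<noteq> 2) is expressed as q odd.\<close>
definition padic_field :: "('f::field \<Rightarrow> int) \<Rightarrow> nat \<Rightarrow> bool" where
  "padic_field v q \<longleftrightarrow>
     (\<forall>x y. x \<noteq> 0 \<longrightarrow> y \<noteq> 0 \<longrightarrow> v (x * y) = v x + v y) \<and>
     (\<forall>x y. x \<noteq> 0 \<longrightarrow> y \<noteq> 0 \<longrightarrow> x + y \<noteq> 0 \<longrightarrow> min (v x) (v y) \<le> v (x + y)) \<and>
     (\<exists>w. w \<noteq> 0 \<and> v w = 1) \<and>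
     (\<forall>k::nat. 0 < k \<longrightarrow> of_nat k \<noteq> (0::'f)) \<and>
     (\<forall>s::nat \<Rightarrow> 'f. (\<forall>M. \<exists>N. \<forall>i\<ge>N. \<forall>j\<ge>N. s i - s j \<in> PF v M) \<longrightarrow>
        (\<exists>l. \<forall>M. \<exists>N. \<forall>i\<ge>N. s i - l \<in> PF v M)) \<and>
     card (residue_classes v) = q \<and> 1 < q \<and> odd q"

text \<open>Since p is odd, the unramified quadratic extension is L = F(sqrt e) for a unit e
which is a non-square modulo p. Elements of L are pairs (a,b) = a + b sqrt e.\<close>
definition unram_param :: "('f::field \<Rightarrow> int) \<Rightarrow> 'f \<Rightarrow> bool" where
  "unram_param v e \<longleftrightarrow> e \<noteq> 0 \<and> v e = 0 \<and> \<not> (\<exists>y \<in> OF v. y * y - e \<in> PF v 1)"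

definition lmul :: "'f::field \<Rightarrow> 'f \<times> 'f \<Rightarrow> 'f \<times> 'f \<Rightarrow> 'f \<times> 'f" where
  "lmul e x y = (fst x * fst y + e * snd x * snd y, fst x * snd y + snd x * fst y)"

definition lsub :: "'f::field \<times> 'f \<Rightarrow> 'f \<times> 'f \<Rightarrow> 'f \<times> 'f" where
  "lsub x y = (fst x - fst y, snd x - snd y)"

definition lneg :: "'f::field \<times> 'f \<Rightarrow> 'f \<times> 'f" where
  "lneg x = (- fst x, - snd x)"

definition lconj :: "'f::field \<times> 'f \<Rightarrow> 'f \<times> 'f" where
  "lconj x = (fst x, - snd x)"

definition lscal :: "'f::field \<Rightarrow> 'f \<times> 'f \<Rightarrow> 'f \<times> 'f" where
  "lscal a x = (a * fst x, a * snd x)"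

definition lnorm :: "'f::field \<Rightarrow> 'f \<times> 'f \<Rightarrow> 'f" where
  "lnorm e x = fst x * fst x - e * snd x * snd x"

definition ltr :: "'f::field \<times> 'f \<Rightarrow> 'f" where
  "ltr x = 2 * fst x"

text \<open>p_L^m = p^m O_L (L/F unramified, O_L = O + O sqrt e).\<close>
definition PL :: "('f::field \<Rightarrow> int) \<Rightarrow> int \<Rightarrow> ('f \<times> 'f) set" where
  "PL v m = PF v m \<times> PF v m"

definition omega :: "'f::field \<Rightarrow> 'f \<Rightarrow> complex" where
  "omega e a = (if \<exists>y. y \<noteq> (0,0) \<and> a = lnorm e y then 1 else -1)"

text \<open>|a|_L for a in F^x: normalized absolute value of L, q_L = q^2.\<close>
definition absL_F :: "('f::field \<Rightarrow> int) \<Rightarrow> nat \<Rightarrow> 'f \<Rightarrow> real" where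
  "absL_F v q a = (real q ^ 2) powr (- real_of_int (v a))"

definition additive_char_conductor ::
  "('f::field \<Rightarrow> int) \<Rightarrow> ('f \<Rightarrow> complex) \<Rightarrow> int \<Rightarrow> bool" where
  "additive_char_conductor v tau c \<longleftrightarrow>
     (\<forall>x y. tau (x + y) = tau x * tau y) \<and> (\<forall>x. tau x \<noteq> 0) \<and>
     (\<forall>m. (\<forall>x \<in> PF v m. tau x = 1) \<longleftrightarrow> c \<le> m)"

definition char_L :: "('f::field \<Rightarrow> int) \<Rightarrow> 'f \<Rightarrow> ('f \<times> 'f \<Rightarrow> complex) \<Rightarrow> bool" where
  "char_L v e chi \<longleftrightarrow>
     (\<forall>x. x \<noteq> (0,0) \<longrightarrow> chi x \<noteq> 0) \<and>
     (\<forall>x y. x \<noteq> (0,0) \<longrightarrow> y \<noteq> (0,0) \<longrightarrow> chi (lmul e x y) = chi x * chi y) \<and>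
     (\<exists>m\<ge>1. \<forall>x. lsub x (1,0) \<in> PL v m \<longrightarrow> chi x = 1)"

definition factors_through_norm :: "'f::field \<Rightarrow> ('f \<times> 'f \<Rightarrow> complex) \<Rightarrow> bool" where
  "factors_through_norm e chi \<longleftrightarrow> (\<exists>mu. \<forall>y. y \<noteq> (0,0) \<longrightarrow> chi y = mu (lnorm e y))"

definition schwartz :: "('f::field \<Rightarrow> int) \<Rightarrow> ('f \<times> 'f \<Rightarrow> complex) \<Rightarrow> bool" where
  "schwartz v Phi \<longleftrightarrow> (\<exists>m k. (\<forall>x. x \<notin> PL v (- k) \<longrightarrow> Phi x = 0) \<and>
                              (\<forall>x y. lsub x y \<in> PL v m \<longrightarrow> Phi x = Phi y))"

definition schwartz_chi ::
  "('f::field \<Rightarrow> int) \<Rightarrow> 'f \<Rightarrow> ('f \<times> 'f \<Rightarrow> complex) \<Rightarrow> ('f \<times> 'f \<Rightarrow> complex) set" where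
  "schwartz_chi v e chi = {Phi. schwartz v Phi \<and>
      (\<forall>x y. lnorm e y = 1 \<longrightarrow> Phi (lmul e x y) = inverse (chi y) * Phi x)}"

definition cosetL :: "('f::field \<Rightarrow> int) \<Rightarrow> int \<Rightarrow> 'f \<times> 'f \<Rightarrow> ('f \<times> 'f) set" where
  "cosetL v m x = {y. lsub y x \<in> PL v m}"

text \<open>Riemann sum for a function constant on cosets of p_L^m and supported in p_L^(-k),
w.r.t. the Haar measure with vol(O_L) = 1 (so vol(p_L^m) = q^(-2m)).\<close>
definition level_sum ::
  "('f::field \<Rightarrow> int) \<Rightarrow> nat \<Rightarrow> int \<Rightarrow> int \<Rightarrow> ('f \<times> 'f \<Rightarrow> complex) \<Rightarrow> complex" where
  "level_sum v q m k Phi =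
     (\<Sum>C \<in> cosetL v m ` PL v (- k). Phi (SOME x. x \<in> C)) *
     complex_of_real (real q powr (- 2 * real_of_int m))"

definition integral0 :: "('f::field \<Rightarrow> int) \<Rightarrow> nat \<Rightarrow> ('f \<times> 'f \<Rightarrow> complex) \<Rightarrow> complex" where
  "integral0 v q Phi = (THE I. \<forall>m k. - k \<le> m \<longrightarrow>
       (\<forall>x. x \<notin> PL v (- k) \<longrightarrow> Phi x = 0) \<longrightarrow>
       (\<forall>x y. lsub x y \<in> PL v m \<longrightarrow> Phi x = Phi y) \<longrightarrow> I = level_sum v q m k Phi)"

definition pairing :: "'f::field \<Rightarrow> ('f \<Rightarrow> complex) \<Rightarrow> 'f \<times> 'f \<Rightarrow> 'f \<times> 'f \<Rightarrow> complex" where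
  "pairing e tau x y = tau (ltr (lmul e x y))"

text \<open>Fourier transform w.r.t. the Haar measure lam * (measure with vol(O_L)=1).\<close>
definition fourier ::
  "('f::field \<Rightarrow> int) \<Rightarrow> nat \<Rightarrow> 'f \<Rightarrow> ('f \<Rightarrow> complex) \<Rightarrow> real \<Rightarrow>
   ('f \<times> 'f \<Rightarrow> complex) \<Rightarrow> ('f \<times> 'f \<Rightarrow> complex)" where
  "fourier v q e tau lam Phi =
     (\<lambda>x. complex_of_real lam * integral0 v q (\<lambda>y. Phi y * pairing e tau x y))"

definition selfdual_measure ::
  "('f::field \<Rightarrow> int) \<Rightarrow> nat \<Rightarrow> 'f \<Rightarrow> ('f \<Rightarrow> complex) \<Rightarrow> real \<Rightarrow> bool" where
  "selfdual_measure v q e tau lam \<longleftrightarrow> 0 < lam \<and>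
     (\<forall>Phi. schwartz v Phi \<longrightarrow>
        (\<forall>x. fourier v q e tau lam (fourier v q e tau lam Phi) x = Phi (lneg x)))"

text \<open>(a,b,c,d) stands for the matrix [[a,b],[c,d]].\<close>
type_synonym 'f mat2 = "'f \<times> 'f \<times> 'f \<times> 'f"

fun mmul :: "'f::field mat2 \<Rightarrow> 'f mat2 \<Rightarrow> 'f mat2" where
  "mmul (a, b, c, d) (a', b', c', d') =
     (a * a' + b * c', a * b' + b * d', c * a' + d * c', c * b' + d * d')"

fun det2 :: "'f::field mat2 \<Rightarrow> 'f" where
  "det2 (a, b, c, d) = a * d - b * c"

definition Gplus :: "'f::field \<Rightarrow> 'f mat2 set" where
  "Gplus e = {g. \<exists>y. y \<noteq> (0,0) \<and> det2 g = lnorm e y}"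

definition Kcong :: "('f::field \<Rightarrow> int) \<Rightarrow> nat \<Rightarrow> 'f mat2 set" where
  "Kcong v n = {(a, b, c, d). a - 1 \<in> PF v (int n) \<and> b \<in> PF v (int n) \<and>
                              c \<in> PF v (int n) \<and> d - 1 \<in> PF v (int n)}"

definition weil_rep ::
  "('f::field \<Rightarrow> int) \<Rightarrow> nat \<Rightarrow> 'f \<Rightarrow> ('f \<Rightarrow> complex) \<Rightarrow> ('f \<times> 'f \<Rightarrow> complex) \<Rightarrow> real \<Rightarrow>
   ('f mat2 \<Rightarrow> ('f \<times> 'f \<Rightarrow> complex) \<Rightarrow> ('f \<times> 'f \<Rightarrow> complex)) \<Rightarrow> bool" where
  "weil_rep v q e tau chi lam rho \<longleftrightarrow>
     (let S = schwartz_chi v e chi in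
       (\<forall>g \<in> Gplus e. \<forall>Phi \<in> S. rho g Phi \<in> S) \<and>
       (\<forall>g \<in> Gplus e. \<forall>Phi \<in> S. \<forall>Psi \<in> S. \<forall>a.
           rho g (\<lambda>x. a * Phi x + Psi x) = (\<lambda>x. a * rho g Phi x + rho g Psi x)) \<and>
       (\<forall>Phi \<in> S. rho (1, 0, 0, 1) Phi = Phi) \<and>
       (\<forall>g \<in> Gplus e. \<forall>h \<in> Gplus e. \<forall>Phi \<in> S. rho (mmul g h) Phi = rho g (rho h Phi)) \<and>
       (\<exists>Phi \<in> S. Phi \<noteq> (\<lambda>_. 0)) \<and>
       (\<forall>W. W \<subseteq> S \<longrightarrow> (\<lambda>_. 0) \<in> W \<longrightarrow>
            (\<forall>Phi \<in> W. \<forall>Psi \<in> W. \<forall>a. (\<lambda>x. a * Phi x + Psi x) \<in> W) \<longrightarrow>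
            (\<forall>g \<in> Gplus e. \<forall>Phi \<in> W. rho g Phi \<in> W) \<longrightarrow>
            W = {\<lambda>_. 0} \<or> W = S) \<and>
       (\<forall>u. \<forall>Phi \<in> S. rho (1, u, 0, 1) Phi = (\<lambda>x. tau (u * lnorm e x) * Phi x)) \<and>
       (\<forall>a. a \<noteq> 0 \<longrightarrow> (\<forall>Phi \<in> S. rho (a, 0, 0, inverse a) Phi =
            (\<lambda>x. omega e a * complex_of_real (sqrt (absL_F v q a)) * Phi (lscal a x)))) \<and>
       (\<exists>gamma. cmod gamma = 1 \<and>
          (\<forall>Phi \<in> S. rho (0, 1, -1, 0) Phi = (\<lambda>x. gamma * fourier v q e tau lam Phi (lconj x)))))"

definition fixed_vectors ::
  "('f::field \<Rightarrow> int) \<Rightarrow> 'f \<Rightarrow> ('f \<times> 'f \<Rightarrow> complex) \<Rightarrow>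
   ('f mat2 \<Rightarrow> ('f \<times> 'f \<Rightarrow> complex) \<Rightarrow> ('f \<times> 'f \<Rightarrow> complex)) \<Rightarrow> nat \<Rightarrow>
   ('f \<times> 'f \<Rightarrow> complex) set" where
  "fixed_vectors v e chi rho n = {Phi \<in> schwartz_chi v e chi. \<forall>g \<in> Kcong v n. rho g Phi = Phi}"

definition lin_indep_fun :: "('a \<Rightarrow> complex) set \<Rightarrow> bool" where
  "lin_indep_fun B \<longleftrightarrow> (\<forall>u. (\<lambda>x. \<Sum>Phi\<in>B. u Phi * Phi x) = (\<lambda>_. 0) \<longrightarrow> (\<forall>Phi\<in>B. u Phi = 0))"

end

theory Submission
  imports Defs "HOL-Library.Function_Algebras" "HOL-Library.Disjoint_Sets" "HOL-Library.Z2"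
begin

text \<open>A vector Phi fixed by K_n is pinned down by three properties. Invariance under the
  upper unipotent matrices of K_n forces Phi to vanish outside p_L^s, where 2s = c - a and a
  is n or n - 1, whichever makes c - a even. The same holds for the Fourier transform of Phi,
  because the Weyl element conjugates upper into lower unipotents of K_n; by Fourier inversion
  Phi is therefore constant on cosets of p_L^(c - s) = p_L^(s + a). Finally
  Phi (x y) = chi y ^-1 Phi x for y in L^1. So all fixed vectors are determined, by the same
  linear formulas, by their values at representatives of the L^1-orbits on p_L^s modulo
  p_L^(s + a). By Hilbert 90 with error control (2 is a unit) such an orbit is determined by
  the norm of x modulo a suitable power of p, and a rescaled norm ranges over O / p^a, which has
  q^a elements.\<close>

section \<open>Linear algebra\<close>

lemma sum_fun_apply: "(\<Sum>i\<in>A. f i) x = (\<Sum>i\<in>A. (f i x :: 'b::comm_monoid_add))"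
  by (induction A rule: infinite_finite_induct) auto

lemma inj_on_restrict_if_independent_on:
  fixes B :: "('a \<Rightarrow> complex) set" and R :: "'a set"
  assumes "finite B"
    and indep: "\<And>u. \<forall>r\<in>R. (\<Sum>Phi\<in>B. u Phi * Phi r) = 0 \<Longrightarrow> \<forall>Phi\<in>B. u Phi = 0"
  shows "inj_on (\<lambda>Phi x. if x \<in> R then Phi x else 0) B"
proof (rule inj_onI, rule ccontr)
  fix P1 P2 assume P: "P1 \<in> B" "P2 \<in> B" "P1 \<noteq> P2"
    and eq: "(\<lambda>x. if x \<in> R then P1 x else 0) = (\<lambda>x. if x \<in> R then P2 x else 0)"
  define u where "u = (\<lambda>Phi. if Phi = P1 then (1::complex) else if Phi = P2 then -1 else 0)"
  have "(\<Sum>Phi\<in>B. u Phi * Phi r) = 0" if r: "r \<in> R" for r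
  proof -
    have "P1 r = P2 r" using fun_cong[OF eq, of r] r by simp
    have "(\<Sum>Phi\<in>B. u Phi * Phi r) = (\<Sum>Phi\<in>{P1,P2}. u Phi * Phi r)"
      by (rule sum.mono_neutral_right) (use assms(1) P in \<open>auto simp: u_def\<close>)
    also have "\<dots> = 0" using P \<open>P1 r = P2 r\<close> by (simp add: u_def)
    finally show ?thesis .
  qed
  then have "u P1 = 0" using indep P by blast
  then show False by (simp add: u_def)
qed

lemma restrict_eq_sum_deltas:
  assumes "finite R"
  shows "(\<lambda>x. if x \<in> R then Phi x else 0) =
    (\<Sum>r\<in>R. (\<lambda>x. Phi r * (if x = r then 1 else 0 :: complex)))"
proof
  fix x
  show "(if x \<in> R then Phi x else 0) = (\<Sum>r\<in>R. (\<lambda>x. Phi r * (if x = r then 1 else 0))) x"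
    using assms by (simp add: sum_fun_apply if_distrib[of "\<lambda>y. _ * y"] cong: if_cong)
qed

lemma card_le_card_if_independent_on:
  fixes B :: "('a \<Rightarrow> complex) set" and R :: "'a set"
  assumes fin: "finite B" "finite R"
    and indep: "\<And>u. \<forall>r\<in>R. (\<Sum>Phi\<in>B. u Phi * Phi r) = 0 \<Longrightarrow> \<forall>Phi\<in>B. u Phi = 0"
  shows "card B \<le> card R"
proof -
  interpret vs: vector_space "\<lambda>(c::complex) (f::'a \<Rightarrow> complex). \<lambda>x. c * f x"
    by unfold_locales (auto simp: plus_fun_def algebra_simps)
  define res where "res = (\<lambda>Phi::'a \<Rightarrow> complex. \<lambda>x. if x \<in> R then Phi x else 0)"
  define delta where "delta = (\<lambda>r::'a. \<lambda>x. if x = r then (1::complex) else 0)"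
  have inj: "inj_on res B"
    unfolding res_def using inj_on_restrict_if_independent_on[OF fin(1) indep] by blast
  have independent: "vs.independent (res ` B)"
  proof
    assume "vs.dependent (res ` B)"
    then obtain t u where t: "finite t" "t \<subseteq> res ` B"
      and s: "(\<Sum>w\<in>t. (\<lambda>x. u w * w x)) = 0" and w: "\<exists>w\<in>t. u w \<noteq> 0"
      unfolding vs.dependent_explicit by blast
    define u' where "u' = (\<lambda>Phi. if res Phi \<in> t then u (res Phi) else 0)"
    have "(\<Sum>Phi\<in>B. u' Phi * Phi r) = 0" if r: "r \<in> R" for r
    proof -
      have "(\<Sum>Phi\<in>B. u' Phi * Phi r) = (\<Sum>Phi\<in>B \<inter> res -` t. u (res Phi) * res Phi r)"
        by (rule sum.mono_neutral_cong_right) (use fin r in \<open>auto simp: u'_def res_def\<close>)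
      also have "\<dots> = (\<Sum>w\<in>res ` (B \<inter> res -` t). u w * w r)"
        by (rule sum.reindex_cong[symmetric]) (use inj in \<open>auto intro: inj_on_subset\<close>)
      also have "res ` (B \<inter> res -` t) = t" using t by auto
      also have "(\<Sum>w\<in>t. u w * w r) = (\<Sum>w\<in>t. (\<lambda>x. u w * w x)) r"
        by (simp add: sum_fun_apply)
      finally show ?thesis using s by simp
    qed
    then have "\<forall>Phi\<in>B. u' Phi = 0" using indep by blast
    moreover obtain w0 where "w0 \<in> t" "u w0 \<noteq> 0" using w by blast
    moreover then obtain P0 where "P0 \<in> B" "w0 = res P0" using t by blast
    ultimately show False by (auto simp: u'_def)
  qed
  have spanned: "res ` B \<subseteq> vs.span (delta ` R)"
  proof
    fix f assume "f \<in> res ` B"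
    then obtain Phi where "f = (\<Sum>r\<in>R. (\<lambda>x. Phi r * delta r x))"
      using restrict_eq_sum_deltas[OF fin(2)] by (auto simp: res_def delta_def)
    also have "\<dots> \<in> vs.span (delta ` R)"
      by (intro vs.span_sum) (metis (no_types) image_eqI vs.span_base vs.span_scale)
    finally show "f \<in> vs.span (delta ` R)" .
  qed
  have "card (res ` B) \<le> card (delta ` R)"
    using vs.independent_span_bound[OF _ independent spanned] fin by auto
  also have "\<dots> \<le> card R" by (rule card_image_le[OF fin(2)])
  finally show ?thesis using card_image[OF inj] by simp
qed

lemma lin_indep_fun_card_le:
  fixes B :: "('a \<Rightarrow> complex) set" and R :: "'a set"
  assumes "finite B" "finite R" "lin_indep_fun B"
    and determined: "\<And>x. \<exists>k. \<exists>r\<in>R. \<forall>Phi\<in>B. Phi x = k * Phi r"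
  shows "card B \<le> card R"
proof (rule card_le_card_if_independent_on[OF assms(1,2)])
  fix u assume vanish: "\<forall>r\<in>R. (\<Sum>Phi\<in>B. u Phi * Phi r) = 0"
  have "(\<Sum>Phi\<in>B. u Phi * Phi x) = 0" for x
  proof -
    obtain k r where "r \<in> R" and kr: "\<forall>Phi\<in>B. Phi x = k * Phi r" using determined by blast
    then have "(\<Sum>Phi\<in>B. u Phi * Phi x) = k * (\<Sum>Phi\<in>B. u Phi * Phi r)"
      by (simp add: sum_distrib_left kr algebra_simps)
    with vanish \<open>r \<in> R\<close> show ?thesis by simp
  qed
  then show "\<forall>Phi\<in>B. u Phi = 0" using assms(3) unfolding lin_indep_fun_def by blast
qed

section \<open>The valuation of F\<close>

lemma even_card_if_fixpoint_free_involution: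
  assumes "finite A" "\<And>x. x \<in> A \<Longrightarrow> f x \<in> A" "\<And>x. x \<in> A \<Longrightarrow> f (f x) = x"
    "\<And>x. x \<in> A \<Longrightarrow> f x \<noteq> x"
  shows "even (card A)"
proof -
  have "(\<Sum>x\<in>A. 1 :: bit) = 0"
    by (rule sum_involution_eq_0[where h = f]) (use assms in auto)
  then have "of_nat (card A) = (0 :: bit)" by simp
  then show ?thesis by (metis even_of_nat_iff even_zero)
qed

locale padic =
  fixes v :: "'f::field \<Rightarrow> int" and q :: nat
  assumes padic_field: "padic_field v q"
begin

lemma v_mult: "x \<noteq> 0 \<Longrightarrow> y \<noteq> 0 \<Longrightarrow> v (x * y) = v x + v y"
  using padic_field unfolding padic_field_def by (elim conjE) blast

lemma v_add: "x \<noteq> 0 \<Longrightarrow> y \<noteq> 0 \<Longrightarrow> x + y \<noteq> 0 \<Longrightarrow> min (v x) (v y) \<le> v (x + y)"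
  using padic_field unfolding padic_field_def by (elim conjE) blast

lemma of_nat_neq_zero: "0 < k \<Longrightarrow> of_nat k \<noteq> (0::'f)"
  using padic_field unfolding padic_field_def by (elim conjE) blast

lemma two_neq_zero: "(2::'f) \<noteq> 0"
  using of_nat_neq_zero[of 2] by simp

lemma card_residue_classes: "card (residue_classes v) = q"
  using padic_field unfolding padic_field_def by (elim conjE) assumption

lemma odd_q: "odd q"
  using padic_field unfolding padic_field_def by (elim conjE) assumption

lemma finite_residue_classes: "finite (residue_classes v)"
  using card_residue_classes odd_q by (metis card.infinite even_zero)

definition uniformizer :: 'f where "uniformizer = (SOME w. w \<noteq> 0 \<and> v w = 1)"

lemma uniformizer: "uniformizer \<noteq> 0" "v uniformizer = 1"
proof -
  have "\<exists>w. w \<noteq> 0 \<and> v w = 1"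
    using padic_field unfolding padic_field_def by (elim conjE) assumption
  then show "uniformizer \<noteq> 0" "v uniformizer = 1"
    unfolding uniformizer_def by (metis (mono_tags, lifting) someI_ex)+
qed

lemma v_one: "v 1 = 0"
  using v_mult[of 1 1] by simp

lemma v_minus: "v (- x) = v x"
proof (cases "x = 0")
  case False
  have "v (-1) = 0" using v_mult[of "-1" "-1"] v_one by simp
  then show ?thesis using False v_mult[of "-1" x] by simp
qed simp

lemma v_inverse: "x \<noteq> 0 \<Longrightarrow> v (inverse x) = - v x"
  using v_mult[of x "inverse x"] v_one by simp

lemma v_divide: "x \<noteq> 0 \<Longrightarrow> y \<noteq> 0 \<Longrightarrow> v (x / y) = v x - v y"
  using v_mult[of x "inverse y"] v_inverse[of y] by (simp add: divide_inverse)

lemma v_power: "x \<noteq> 0 \<Longrightarrow> v (x ^ k) = int k * v x"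
  by (induction k) (auto simp: v_one v_mult algebra_simps)

lemma v_power_int: "x \<noteq> 0 \<Longrightarrow> v (x powi k) = k * v x"
proof (cases "k \<ge> 0")
  case False
  assume x: "x \<noteq> 0"
  then show ?thesis using False v_power[OF x, of "nat (-k)"] v_inverse[of "x ^ nat (-k)"]
    by (simp add: power_int_def power_inverse)
qed (simp add: power_int_def v_power)

lemma v_uniformizer_power_int: "uniformizer powi k \<noteq> 0" "v (uniformizer powi k) = k"
  using v_power_int uniformizer by auto

lemma mem_PF_iff: "x \<in> PF v m \<longleftrightarrow> x = 0 \<or> m \<le> v x"
  by (simp add: PF_def)

lemma zero_in_PF [simp]: "0 \<in> PF v m"
  by (simp add: mem_PF_iff)

lemma PF_add: "x \<in> PF v m \<Longrightarrow> y \<in> PF v m \<Longrightarrow> x + y \<in> PF v m"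
  using v_add[of x y] by (cases "x = 0 \<or> y = 0 \<or> x + y = 0") (auto simp: mem_PF_iff)

lemma PF_minus_iff: "- x \<in> PF v m \<longleftrightarrow> x \<in> PF v m"
  by (auto simp: mem_PF_iff v_minus)

lemma PF_diff: "x \<in> PF v m \<Longrightarrow> y \<in> PF v m \<Longrightarrow> x - y \<in> PF v m"
  using PF_add[of x m "- y"] PF_minus_iff[of y m] by simp

lemma PF_mult: "x \<in> PF v m \<Longrightarrow> y \<in> PF v k \<Longrightarrow> x * y \<in> PF v (m + k)"
  by (cases "x = 0 \<or> y = 0") (auto simp: mem_PF_iff v_mult)

lemma one_in_PF0: "1 \<in> PF v 0"
  by (simp add: mem_PF_iff v_one)

lemma v_add_eq_of_less:
  assumes "x \<noteq> 0" "y = 0 \<or> v x < v y"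
  shows "x + y \<noteq> 0 \<and> v (x + y) = v x"
proof (cases "y = 0")
  case False
  with assms have lt: "v x < v y" by simp
  have ne: "x + y \<noteq> 0"
    using lt v_minus[of x] by (metis add_eq_0_iff less_irrefl)
  have "v x \<le> v (x + y)" using v_add[OF assms(1) False ne] lt by simp
  moreover have "min (v (x + y)) (v (- y)) \<le> v (x + y + - y)"
    using v_add[of "x + y" "- y"] ne False assms(1) by simp
  ultimately show ?thesis using ne lt v_minus[of y] by auto
qed (use assms in simp)

lemma v_eq_of_congruent:
  assumes "x \<noteq> 0" "v x < m" "x - y \<in> PF v m"
  shows "y \<noteq> 0 \<and> v y = v x"
proof -
  have "- (x - y) = 0 \<or> v x < v (- (x - y))"
    using assms(2,3) PF_minus_iff[of "x - y" m] unfolding mem_PF_iff by auto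
  from v_add_eq_of_less[OF assms(1) this] show ?thesis by simp
qed

text \<open>If 2 lay in the maximal ideal, translation by 1 would be a fixed-point-free involution
  of the residue field, whose order q is odd.\<close>
lemma v_two: "v 2 = 0"
proof (rule ccontr)
  have two_in_O: "2 \<in> PF v 0" using PF_add[OF one_in_PF0 one_in_PF0] by simp
  assume "v 2 \<noteq> 0"
  then have two: "2 \<in> PF v 1" using two_in_O two_neq_zero by (simp add: mem_PF_iff)
  define cls where "cls x = {y \<in> OF v. x - y \<in> PF v 1}" for x
  define shift where "shift C = (\<lambda>y. y + 1) ` C" for C :: "'f set"
  have O_shift: "x + 1 \<in> OF v" if "x \<in> OF v" for x
    using PF_add[OF _ one_in_PF0] that by (simp add: OF_def)
  have cls_shift: "shift (cls x) = cls (x + 1)" if "x \<in> OF v" for x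
  proof (intro set_eqI iffI)
    fix z assume "z \<in> cls (x + 1)"
    then have "z - 1 \<in> cls x"
      using PF_diff[OF _ one_in_PF0, of z] by (auto simp: cls_def OF_def algebra_simps)
    then show "z \<in> shift (cls x)" unfolding shift_def by (metis diff_add_cancel imageI)
  qed (use PF_add[OF _ one_in_PF0] in \<open>auto simp: shift_def cls_def OF_def\<close>)
  have cls_add_two: "cls (x + 1 + 1) = cls x" for x
  proof -
    have "x + 1 + 1 - y \<in> PF v 1 \<longleftrightarrow> x - y \<in> PF v 1" for y
      using PF_add[OF _ two, of "x - y"] PF_diff[OF _ two, of "x + 1 + 1 - y"]
      by (auto simp: algebra_simps)
    then show ?thesis by (simp add: cls_def)
  qed
  have residue_classes: "residue_classes v = cls ` OF v"
    by (simp add: residue_classes_def cls_def)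
  have "even (card (residue_classes v))"
  proof (rule even_card_if_fixpoint_free_involution[OF finite_residue_classes, where f = shift])
    fix C assume "C \<in> residue_classes v"
    then obtain x where x: "x \<in> OF v" "C = cls x" by (auto simp: residue_classes)
    show "shift C \<in> residue_classes v" using x cls_shift O_shift residue_classes by blast
    have "shift (shift C) = cls (x + 1 + 1)" using x cls_shift O_shift by metis
    then show "shift (shift C) = C" using x cls_add_two by simp
    have "x \<in> cls x" "x \<notin> cls (x + 1)"
      using x v_one by (simp_all add: cls_def mem_PF_iff)
    then show "shift C \<noteq> C" using x cls_shift by metis
  qed
  then show False using card_residue_classes odd_q by simp
qed

end

section \<open>The unramified quadratic extension\<close>

definition ladd :: "'f::field \<times> 'f \<Rightarrow> 'f \<times> 'f \<Rightarrow> 'f \<times> 'f" where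
  "ladd x y = (fst x + fst y, snd x + snd y)"

lemma lnorm_lmul: "lnorm e (lmul e x y) = lnorm e x * lnorm e y"
  by (simp add: lnorm_def lmul_def algebra_simps)

lemma lnorm_lconj: "lnorm e (lconj x) = lnorm e x"
  by (simp add: lnorm_def lconj_def)

lemma lnorm_lscal: "lnorm e (lscal c x) = c * c * lnorm e x"
  by (simp add: lnorm_def lscal_def algebra_simps)

lemma lmul_one_right: "lmul e x (1, 0) = x"
  by (simp add: lmul_def)

lemma lconj_lconj: "lconj (lconj x) = x"
  by (simp add: lconj_def)

locale unramified = padic v q for v :: "'f::field \<Rightarrow> int" and q +
  fixes e :: 'f
  assumes unram_param: "unram_param v e"
begin

lemma e_nonzero: "e \<noteq> 0" and v_e: "v e = 0"
  using unram_param unfolding unram_param_def by simp_all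

lemma e_nonsquare: "y \<in> OF v \<Longrightarrow> y * y - e \<notin> PF v 1"
  using unram_param unfolding unram_param_def by blast

text \<open>The valuation of L at a + b sqrt e; that it is min (v a) (v b) uses that L/F is
  unramified (see v_lnorm).\<close>
definition vL :: "'f \<times> 'f \<Rightarrow> int" where
  "vL x = (if fst x = 0 then v (snd x) else if snd x = 0 then v (fst x)
           else min (v (fst x)) (v (snd x)))"

lemma mem_PL_iff: "x \<in> PL v m \<longleftrightarrow> x = (0, 0) \<or> m \<le> vL x"
  by (cases x) (auto simp: PL_def vL_def mem_PF_iff)

lemma zero_in_PL [simp]: "(0, 0) \<in> PL v m"
  by (simp add: PL_def)

lemma PL_mult: "x \<in> PL v m \<Longrightarrow> y \<in> PL v k \<Longrightarrow> lmul e x y \<in> PL v (m + k)"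
proof -
  assume "x \<in> PL v m" "y \<in> PL v k"
  then have f: "fst x \<in> PF v m" "snd x \<in> PF v m" "fst y \<in> PF v k" "snd y \<in> PF v k"
    by (auto simp: PL_def mem_Times_iff)
  have "e \<in> PF v 0" using v_e by (simp add: mem_PF_iff)
  then have "e * snd x * snd y \<in> PF v (0 + m + k)" using PF_mult f by blast
  moreover have "fst x * fst y \<in> PF v (m + k)" "fst x * snd y \<in> PF v (m + k)"
    "snd x * fst y \<in> PF v (m + k)"
    using PF_mult f by blast+
  ultimately show ?thesis by (simp add: lmul_def PL_def PF_add)
qed

lemma PL_lscal: "c \<in> PF v m \<Longrightarrow> x \<in> PL v k \<Longrightarrow> lscal c x \<in> PL v (m + k)"
  by (auto simp: lscal_def PL_def mem_Times_iff intro!: PF_mult)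

lemma PL_lsub: "x \<in> PL v m \<Longrightarrow> y \<in> PL v m \<Longrightarrow> lsub x y \<in> PL v m"
  by (auto simp: lsub_def PL_def mem_Times_iff intro!: PF_diff)

lemma PL_ladd: "x \<in> PL v m \<Longrightarrow> y \<in> PL v m \<Longrightarrow> ladd x y \<in> PL v m"
  by (auto simp: ladd_def PL_def mem_Times_iff intro!: PF_add)

lemma PL_lneg: "x \<in> PL v m \<Longrightarrow> lneg x \<in> PL v m"
  by (auto simp: lneg_def PL_def mem_Times_iff PF_minus_iff)

lemma PL_lconj: "x \<in> PL v m \<Longrightarrow> lconj x \<in> PL v m"
  by (auto simp: lconj_def PL_def mem_Times_iff PF_minus_iff)

lemma v_unit_square_minus_e:
  assumes "r \<noteq> 0" "v r = 0"
  shows "r * r - e \<noteq> 0 \<and> v (r * r - e) = 0"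
proof -
  have ns: "r * r - e \<notin> PF v 1" using e_nonsquare assms(2) by (simp add: OF_def mem_PF_iff)
  then have ne: "r * r - e \<noteq> 0" by auto
  from assms(1) have "min (v (r * r)) (v (- e)) \<le> v (r * r + - e)"
    using v_add[of "r * r" "- e"] e_nonzero ne by simp
  then have "0 \<le> v (r * r - e)" using assms v_mult[of r r] by (simp add: v_minus v_e)
  then show ?thesis using ns ne by (simp add: mem_PF_iff)
qed

text \<open>The only delicate case is v a = v b, where a^2 - e b^2 = b^2 ((a/b)^2 - e) and
  e is not a square modulo the maximal ideal.\<close>
lemma v_lnorm:
  assumes "x \<noteq> (0, 0)"
  shows "lnorm e x \<noteq> 0 \<and> v (lnorm e x) = 2 * vL x"
proof -
  obtain a b where x: "x = (a, b)" by (cases x)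
  have N: "lnorm e x = a * a + (- (e * b * b))" by (simp add: x lnorm_def)
  show ?thesis
  proof (cases "b = 0")
    case True
    then have "a \<noteq> 0" using assms x by simp
    then show ?thesis using True by (simp add: x lnorm_def vL_def v_mult)
  next
    case b: False
    have vb: "v (- (e * b * b)) = 2 * v b" "- (e * b * b) \<noteq> 0"
      using b e_nonzero by (simp_all add: v_minus v_mult v_e)
    show ?thesis
    proof (cases "a = 0")
      case True
      then show ?thesis using vb by (simp add: x lnorm_def vL_def)
    next
      case a: False
      have va: "v (a * a) = 2 * v a" "a * a \<noteq> 0" using a by (simp_all add: v_mult)
      consider "v a < v b" | "v b < v a" | "v a = v b" by linarith
      then show ?thesis
      proof cases
        case 1
        then show ?thesis using v_add_eq_of_less[of "a * a" "- (e * b * b)"] va vb a b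
          by (simp add: N vL_def x lnorm_def)
      next
        case 2
        then show ?thesis using v_add_eq_of_less[of "- (e * b * b)" "a * a"] va vb a b
          by (simp add: N vL_def x add.commute lnorm_def)
      next
        case 3
        define r where "r = a / b"
        have "r \<noteq> 0" "v r = 0" using 3 a b by (simp_all add: r_def v_divide)
        then have vre: "r * r - e \<noteq> 0" "v (r * r - e) = 0" using v_unit_square_minus_e by blast+
        have "lnorm e x = (b * b) * (r * r - e)"
          using b by (simp add: x lnorm_def r_def field_simps)
        then show ?thesis using vre b 3 a by (simp add: v_mult vL_def x)
      qed
    qed
  qed
qed

lemma lnorm_eq_zero_iff: "lnorm e x = 0 \<longleftrightarrow> x = (0, 0)"
  using v_lnorm[of x] by (auto simp: lnorm_def)

section \<open>Orbits of norm-one elements\<close>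

text \<open>Hilbert 90 with error control: y = z / conj z for z = \<alpha> + w conj \<alpha>, where the unit \<alpha> is
  chosen (using that 2 is a unit) so that z is a unit; then y - w = (1 - N w) z \<alpha> / N z.\<close>
lemma exists_norm_one_near:
  assumes w0: "w \<in> PL v 0" and w1: "w \<notin> PL v 1" and m: "1 - lnorm e w \<in> PF v m"
  shows "\<exists>y. lnorm e y = 1 \<and> lsub y w \<in> PL v m"
proof -
  have "\<exists>\<alpha>. \<alpha> \<in> PL v 0 \<and> ladd \<alpha> (lmul e w (lconj \<alpha>)) \<notin> PL v 1"
  proof (rule ccontr)
    assume "\<not> ?thesis"
    then have "ladd (1,0) (lmul e w (lconj (1,0))) \<in> PL v 1"
      and "ladd (0,1) (lmul e w (lconj (0,1))) \<in> PL v 1"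
      using one_in_PF0 by (auto simp: PL_def)
    then have "1 + fst w \<in> PF v 1" "1 - fst w \<in> PF v 1"
      by (simp_all add: ladd_def lmul_def lconj_def PL_def mem_Times_iff)
    then have "(1 + fst w) + (1 - fst w) \<in> PF v 1" by (rule PF_add)
    then show False using v_two two_neq_zero by (simp add: mem_PF_iff)
  qed
  then obtain \<alpha> where a0: "\<alpha> \<in> PL v 0" and z1: "ladd \<alpha> (lmul e w (lconj \<alpha>)) \<notin> PL v 1"
    by blast
  define z where "z = ladd \<alpha> (lmul e w (lconj \<alpha>))"
  have z0: "z \<in> PL v 0"
    unfolding z_def using PL_ladd[OF a0] PL_mult[OF w0 PL_lconj[OF a0]] by simp
  have Nz: "lnorm e z \<noteq> 0" "v (lnorm e z) = 0"
    using v_lnorm[of z] z0 z1 by (auto simp: z_def mem_PL_iff)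
  define y where "y = lscal (inverse (lnorm e z)) (lmul e z z)"
  have Ny: "lnorm e y = 1" using Nz by (simp add: y_def lnorm_lscal lnorm_lmul field_simps)
  have eq: "lsub y w = lscal (inverse (lnorm e z)) (lmul e z (lscal (1 - lnorm e w) \<alpha>))"
    using Nz(1) unfolding y_def z_def
    by (simp add: lsub_def lscal_def lmul_def ladd_def lconj_def lnorm_def prod_eq_iff field_simps)
  have "inverse (lnorm e z) \<in> PF v 0" using Nz by (simp add: mem_PF_iff v_inverse)
  moreover have "lmul e z (lscal (1 - lnorm e w) \<alpha>) \<in> PL v (0 + (m + 0))"
    by (rule PL_mult[OF z0 PL_lscal[OF m a0]])
  ultimately have "lsub y w \<in> PL v (0 + (0 + (m + 0)))" unfolding eq by (rule PL_lscal)
  then show ?thesis using Ny by (intro exI[of _ y]) simp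
qed

lemma norm_one_orbit:
  assumes x: "x \<noteq> (0, 0)" and r: "r \<noteq> (0, 0)" and vL_eq: "vL r = vL x"
    and congruent: "lnorm e x - lnorm e r \<in> PF v (2 * vL x + m)"
  shows "\<exists>y. lnorm e y = 1 \<and> lsub x (lmul e r y) \<in> PL v (vL x + m)"
proof -
  have Nx: "lnorm e x \<noteq> 0" "v (lnorm e x) = 2 * vL x" using v_lnorm[OF x] by auto
  have Nr: "lnorm e r \<noteq> 0" "v (lnorm e r) = 2 * vL x" using v_lnorm[OF r] vL_eq by auto
  define w where "w = lscal (inverse (lnorm e r)) (lmul e x (lconj r))"
  have Nw: "lnorm e w = lnorm e x / lnorm e r"
    using Nr by (simp add: w_def lnorm_lscal lnorm_lmul lnorm_lconj field_simps)
  have "w \<noteq> (0, 0)" using Nw Nx Nr lnorm_eq_zero_iff[of w] by auto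
  moreover have "v (lnorm e w) = 0" using Nw Nx Nr by (simp add: v_divide)
  ultimately have w0: "w \<in> PL v 0" and w1: "w \<notin> PL v 1"
    using v_lnorm[of w] by (auto simp: mem_PL_iff)
  have "- (lnorm e x - lnorm e r) \<in> PF v (2 * vL x + m)"
    using congruent by (simp only: PF_minus_iff)
  moreover have "inverse (lnorm e r) \<in> PF v (- 2 * vL x)"
    using Nr by (simp add: mem_PF_iff v_inverse)
  ultimately have "- (lnorm e x - lnorm e r) * inverse (lnorm e r) \<in> PF v (2 * vL x + m + - 2 * vL x)"
    by (rule PF_mult)
  moreover have "1 - lnorm e w = - (lnorm e x - lnorm e r) * inverse (lnorm e r)"
    using Nr by (simp add: Nw field_simps)
  ultimately have "1 - lnorm e w \<in> PF v m" by simp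
  then obtain y where y: "lnorm e y = 1" "lsub y w \<in> PL v m"
    using exists_norm_one_near[OF w0 w1] by blast
  have "lmul e r w = lscal (inverse (lnorm e r)) (lscal (lnorm e r) x)"
    by (simp add: w_def lmul_def lscal_def lconj_def lnorm_def algebra_simps)
  then have rw: "lmul e r w = x" using Nr by (simp add: lscal_def mult.assoc[symmetric])
  have "lsub x (lmul e r y) = lmul e r (lneg (lsub y w))"
    by (subst rw[symmetric]) (simp add: lmul_def lsub_def lneg_def algebra_simps)
  moreover have "r \<in> PL v (vL x)" using vL_eq by (simp add: mem_PL_iff)
  ultimately have "lsub x (lmul e r y) \<in> PL v (vL x + m)"
    using PL_mult[OF _ PL_lneg[OF y(2)]] by metis
  then show ?thesis using y(1) by blast
qed

lemma exists_residue_digits: "\<exists>D. finite D \<and> card D \<le> q \<and> (\<forall>z\<in>OF v. \<exists>d\<in>D. z - d \<in> PF v 1)"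
proof -
  define D where "D = (\<lambda>C. SOME y. y \<in> C) ` residue_classes v"
  have "\<exists>d\<in>D. z - d \<in> PF v 1" if z: "z \<in> OF v" for z
  proof -
    define C where "C = {y \<in> OF v. z - y \<in> PF v 1}"
    define d where "d = (SOME y. y \<in> C)"
    have "C \<in> residue_classes v" using z unfolding residue_classes_def C_def by (rule imageI)
    then have "d \<in> D" unfolding D_def d_def by (rule imageI)
    moreover have "z \<in> C" using z by (simp add: C_def)
    then have "d \<in> C" unfolding d_def by (rule someI)
    ultimately show ?thesis by (auto simp: C_def)
  qed
  moreover have "finite D" using finite_residue_classes by (simp add: D_def)
  moreover have "card D \<le> q"
    using card_image_le[OF finite_residue_classes] card_residue_classes by (simp add: D_def)
  ultimately show ?thesis by blast
qed

lemma exists_cover_mod_power: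
  "\<exists>T. finite T \<and> card T \<le> q ^ k \<and> (\<forall>z\<in>OF v. \<exists>t\<in>T. z - t \<in> PF v (int k))"
proof (induction k)
  case 0
  show ?case by (intro exI[of _ "{0}"]) (simp add: OF_def)
next
  case (Suc k)
  then obtain T where T: "finite T" "card T \<le> q ^ k"
    and T_cover: "\<forall>z\<in>OF v. \<exists>t\<in>T. z - t \<in> PF v (int k)" by blast
  obtain D where D: "finite D" "card D \<le> q" and D_cover: "\<forall>z\<in>OF v. \<exists>d\<in>D. z - d \<in> PF v 1"
    using exists_residue_digits by blast
  define T' where "T' = (\<lambda>(d, t). d + uniformizer * t) ` (D \<times> T)"
  have "finite T'" using T D by (simp add: T'_def)
  have "card T' \<le> card (D \<times> T)" unfolding T'_def using T D by (intro card_image_le) simp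
  also have "\<dots> \<le> q * q ^ k" using T D by (simp add: card_cartesian_product mult_mono)
  finally have "card T' \<le> q ^ Suc k" by simp
  moreover have "\<exists>t'\<in>T'. z - t' \<in> PF v (int (Suc k))" if z: "z \<in> OF v" for z
  proof -
    obtain d where d: "d \<in> D" "z - d \<in> PF v 1" using D_cover z by blast
    define z' where "z' = (z - d) / uniformizer"
    have "z' \<in> OF v"
    proof (cases "z = d")
      case False
      then have "v z' = v (z - d) - 1" using uniformizer by (simp add: z'_def v_divide)
      then show ?thesis using d(2) False by (simp add: OF_def mem_PF_iff)
    qed (simp add: z'_def OF_def)
    then obtain t where t: "t \<in> T" "z' - t \<in> PF v (int k)" using T_cover by blast
    have "z - (d + uniformizer * t) = uniformizer * (z' - t)"
      using uniformizer by (simp add: z'_def field_simps)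
    moreover have "uniformizer * (z' - t) \<in> PF v (1 + int k)"
      using PF_mult[OF _ t(2), of uniformizer 1] uniformizer by (simp add: mem_PF_iff)
    moreover have "d + uniformizer * t \<in> T'" using d t by (force simp: T'_def)
    ultimately show ?thesis by (metis add.commute of_nat_Suc)
  qed
  ultimately show ?case using \<open>finite T'\<close> by blast
qed

text \<open>N x scaled to have valuation vL x - s: unlike N x itself, its class modulo p^a
  still determines vL x (for vL x < s + a), and then N x modulo p^(s + vL x + a).\<close>
definition scaled_norm :: "int \<Rightarrow> 'f \<times> 'f \<Rightarrow> 'f" where
  "scaled_norm s x = lnorm e x * uniformizer powi (- (s + vL x))"

lemma scaled_norm_zero [simp]: "scaled_norm s (0, 0) = 0"
  by (simp add: scaled_norm_def lnorm_def)

lemma v_scaled_norm: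
  assumes "x \<noteq> (0, 0)"
  shows "scaled_norm s x \<noteq> 0 \<and> v (scaled_norm s x) = vL x - s"
  using v_lnorm[OF assms] v_uniformizer_power_int[of "- (s + vL x)"]
  by (simp add: scaled_norm_def v_mult)

lemma scaled_norm_in_PF_iff: "scaled_norm s x \<in> PF v a \<longleftrightarrow> x \<in> PL v (s + a)"
  using v_scaled_norm[of x s] by (cases "x = (0, 0)") (auto simp: mem_PF_iff mem_PL_iff)

lemma lnorm_eq_scaled_norm: "lnorm e x = scaled_norm s x * uniformizer powi (s + vL x)"
proof -
  have "uniformizer powi (- (s + vL x)) * uniformizer powi (s + vL x) = 1"
    by (simp only: power_int_minus left_inverse[OF v_uniformizer_power_int(1)])
  then show ?thesis by (simp add: scaled_norm_def mult.assoc)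
qed

lemma orbit_of_congruent_scaled_norms:
  assumes congruent: "scaled_norm s x - scaled_norm s r \<in> PF v a"
  shows "\<exists>y. lnorm e y = 1 \<and> lsub x (lmul e r y) \<in> PL v (s + a)"
proof (cases "x \<in> PL v (s + a)")
  case True
  then have "scaled_norm s x - (scaled_norm s x - scaled_norm s r) \<in> PF v a"
    using congruent PF_diff scaled_norm_in_PF_iff by blast
  then have "r \<in> PL v (s + a)" by (simp add: scaled_norm_in_PF_iff)
  then have "lsub x (lmul e r (1, 0)) \<in> PL v (s + a)"
    using PL_lsub[OF True] by (simp add: lmul_one_right)
  then show ?thesis by (intro exI[of _ "(1, 0)"]) (simp add: lnorm_def)
next
  case False
  define k where "k = vL x"
  have x: "x \<noteq> (0, 0)" using False by auto
  have gx: "scaled_norm s x \<noteq> 0" "v (scaled_norm s x) = k - s" "v (scaled_norm s x) < a"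
    using v_scaled_norm[OF x] False scaled_norm_in_PF_iff[of s x a]
    by (auto simp: k_def mem_PF_iff)
  then have gr: "scaled_norm s r \<noteq> 0" "v (scaled_norm s r) = k - s"
    using v_eq_of_congruent[OF gx(1) gx(3) congruent] by auto
  then have r: "r \<noteq> (0, 0)" by auto
  then have vL_eq: "vL r = k" using gr v_scaled_norm[OF r] by simp
  have "uniformizer powi (s + k) \<in> PF v (s + k)"
    using v_uniformizer_power_int by (simp add: mem_PF_iff)
  from PF_mult[OF this congruent]
  have "uniformizer powi (s + k) * (scaled_norm s x - scaled_norm s r) \<in> PF v (s + k + a)" .
  moreover have "uniformizer powi (s + k) * (scaled_norm s x - scaled_norm s r)
      = lnorm e x - lnorm e r"
    using lnorm_eq_scaled_norm[of x s] lnorm_eq_scaled_norm[of r s] vL_eq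
    by (simp add: k_def algebra_simps)
  ultimately have "lnorm e x - lnorm e r \<in> PF v (s + k + a)" by metis
  moreover have "s + k + a = 2 * vL x + (s + a - k)" by (simp add: k_def)
  ultimately have "lnorm e x - lnorm e r \<in> PF v (2 * vL x + (s + a - k))" by simp
  then obtain y where "lnorm e y = 1" "lsub x (lmul e r y) \<in> PL v (vL x + (s + a - k))"
    using norm_one_orbit[OF x r vL_eq[unfolded k_def]] by blast
  moreover have "vL x + (s + a - k) = s + a" by (simp add: k_def)
  ultimately show ?thesis by metis
qed

lemma orbit_cover:
  "\<exists>R. finite R \<and> card R \<le> q ^ a \<and>
     (\<forall>x\<in>PL v s. \<exists>r\<in>R. \<exists>y. lnorm e y = 1 \<and> lsub x (lmul e r y) \<in> PL v (s + int a))"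
proof -
  obtain T where T: "finite T" "card T \<le> q ^ a"
    and T_cover: "\<forall>z\<in>OF v. \<exists>t\<in>T. z - t \<in> PF v (int a)"
    using exists_cover_mod_power by blast
  define near where "near t x \<longleftrightarrow> x \<in> PL v s \<and> scaled_norm s x - t \<in> PF v (int a)" for t x
  define R where "R = (\<lambda>t. SOME x. near t x) ` {t \<in> T. \<exists>x. near t x}"
  have fin: "finite {t \<in> T. \<exists>x. near t x}" by (rule finite_subset[OF _ T(1)]) blast
  have "card R \<le> card {t \<in> T. \<exists>x. near t x}" unfolding R_def by (rule card_image_le[OF fin])
  also have "\<dots> \<le> card T" by (rule card_mono[OF T(1)]) blast
  finally have "card R \<le> q ^ a" using T(2) by linarith
  moreover have "finite R" unfolding R_def by (rule finite_imageI[OF fin])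
  moreover have "\<exists>r\<in>R. \<exists>y. lnorm e y = 1 \<and> lsub x (lmul e r y) \<in> PL v (s + int a)"
    if x: "x \<in> PL v s" for x
  proof -
    have "scaled_norm s x \<in> OF v" using x scaled_norm_in_PF_iff[of s x 0] by (simp add: OF_def)
    then obtain t where "t \<in> T" "near t x" using T_cover x by (auto simp: near_def)
    define r where "r = (SOME x. near t x)"
    have "r \<in> R" unfolding R_def r_def using \<open>t \<in> T\<close> \<open>near t x\<close> by (intro imageI) blast
    have "near t r" unfolding r_def using \<open>near t x\<close> by (rule someI)
    with \<open>near t x\<close> have "scaled_norm s x - scaled_norm s r \<in> PF v (int a)"
      using PF_diff unfolding near_def by fastforce
    with \<open>r \<in> R\<close> show ?thesis using orbit_of_congruent_scaled_norms by blast
  qed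
  ultimately show ?thesis by blast
qed

end

section \<open>Fixed vectors of the Weil representation\<close>

lemma det_one_in_Gplus: "det2 g = 1 \<Longrightarrow> g \<in> Gplus e"
  unfolding Gplus_def by (intro CollectI exI[of _ "(1, 0)"]) (simp add: lnorm_def)

locale weil_representation = unramified v q e for v :: "'f::field \<Rightarrow> int" and q and e +
  fixes tau :: "'f \<Rightarrow> complex" and c :: int and chi :: "'f \<times> 'f \<Rightarrow> complex" and lam :: real
    and rho :: "'f mat2 \<Rightarrow> ('f \<times> 'f \<Rightarrow> complex) \<Rightarrow> ('f \<times> 'f \<Rightarrow> complex)"
  assumes conductor: "additive_char_conductor v tau c"
    and selfdual: "selfdual_measure v q e tau lam"
    and weil: "weil_rep v q e tau chi lam rho"
begin

lemma tau_add: "tau (x + y) = tau x * tau y"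
  using conductor unfolding additive_char_conductor_def by (elim conjE) blast

lemma tau_trivial_iff: "(\<forall>x\<in>PF v m. tau x = 1) \<longleftrightarrow> c \<le> m"
  using conductor unfolding additive_char_conductor_def by (elim conjE) blast

lemma fourier_fourier: "schwartz v Phi \<Longrightarrow> fourier v q e tau lam (fourier v q e tau lam Phi) x = Phi (lneg x)"
  using selfdual unfolding selfdual_measure_def by (elim conjE) blast

lemma rho_closed: "g \<in> Gplus e \<Longrightarrow> Phi \<in> schwartz_chi v e chi \<Longrightarrow> rho g Phi \<in> schwartz_chi v e chi"
proof -
  have "\<forall>g \<in> Gplus e. \<forall>Phi \<in> schwartz_chi v e chi. rho g Phi \<in> schwartz_chi v e chi"
    using weil unfolding weil_rep_def Let_def by (elim conjE) assumption
  then show "g \<in> Gplus e \<Longrightarrow> Phi \<in> schwartz_chi v e chi \<Longrightarrow> ?thesis" by blast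
qed

lemma rho_mmul:
  "g \<in> Gplus e \<Longrightarrow> h \<in> Gplus e \<Longrightarrow> Phi \<in> schwartz_chi v e chi \<Longrightarrow>
    rho (mmul g h) Phi = rho g (rho h Phi)"
proof -
  have "\<forall>g \<in> Gplus e. \<forall>h \<in> Gplus e. \<forall>Phi \<in> schwartz_chi v e chi.
      rho (mmul g h) Phi = rho g (rho h Phi)"
    using weil unfolding weil_rep_def Let_def by (elim conjE) assumption
  then show "g \<in> Gplus e \<Longrightarrow> h \<in> Gplus e \<Longrightarrow> Phi \<in> schwartz_chi v e chi \<Longrightarrow> ?thesis"
    by blast
qed

lemma rho_upper_unipotent:
  "Phi \<in> schwartz_chi v e chi \<Longrightarrow> rho (1, u, 0, 1) Phi = (\<lambda>x. tau (u * lnorm e x) * Phi x)"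
proof -
  have "\<forall>u. \<forall>Phi \<in> schwartz_chi v e chi. rho (1, u, 0, 1) Phi = (\<lambda>x. tau (u * lnorm e x) * Phi x)"
    using weil unfolding weil_rep_def Let_def by (elim conjE) assumption
  then show "Phi \<in> schwartz_chi v e chi \<Longrightarrow> ?thesis" by blast
qed

lemma rho_weyl:
  obtains gamma where "cmod gamma = 1"
    "\<And>Phi. Phi \<in> schwartz_chi v e chi \<Longrightarrow>
       rho (0, 1, -1, 0) Phi = (\<lambda>x. gamma * fourier v q e tau lam Phi (lconj x))"
proof -
  have "\<exists>gamma. cmod gamma = 1 \<and> (\<forall>Phi \<in> schwartz_chi v e chi.
      rho (0, 1, -1, 0) Phi = (\<lambda>x. gamma * fourier v q e tau lam Phi (lconj x)))"
    using weil unfolding weil_rep_def Let_def by (elim conjE) assumption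
  then show ?thesis using that by blast
qed

text \<open>Invariance under the unipotents of K_n gives tau (u N x) = 1 for u in p^n wherever
  Psi x \<noteq> 0, so p^(n + v (N x)) lies in the kernel of tau.\<close>
lemma support_of_unipotent_invariant:
  assumes Psi: "Psi \<in> schwartz_chi v e chi"
    and invariant: "\<And>u. u \<in> PF v (int n) \<Longrightarrow> rho (1, u, 0, 1) Psi = Psi"
    and nonzero: "Psi x \<noteq> 0" and s: "2 * s \<le> c - int n + 1"
  shows "x \<in> PL v s"
proof (cases "x = (0, 0)")
  case False
  have Nx: "lnorm e x \<noteq> 0" "v (lnorm e x) = 2 * vL x" using v_lnorm[OF False] by auto
  have "tau z = 1" if z: "z \<in> PF v (int n + 2 * vL x)" for z
  proof (cases "z = 0")
    case True
    then show ?thesis using tau_trivial_iff[of c] by auto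
  next
    case False
    define u where "u = z / lnorm e x"
    have "u \<in> PF v (int n)" using z False Nx by (simp add: u_def v_divide mem_PF_iff)
    then have "tau (u * lnorm e x) * Psi x = Psi x"
      using invariant rho_upper_unipotent[OF Psi] by metis
    moreover have "u * lnorm e x = z" using Nx by (simp add: u_def)
    ultimately show ?thesis using nonzero by simp
  qed
  then have "c \<le> int n + 2 * vL x" using tau_trivial_iff by blast
  with s have "s \<le> vL x" by linarith
  then show ?thesis by (simp add: mem_PL_iff)
qed simp

lemma fixed_vectorD:
  assumes "Phi \<in> fixed_vectors v e chi rho n"
  shows "Phi \<in> schwartz_chi v e chi" "g \<in> Kcong v n \<Longrightarrow> rho g Phi = Phi"
  using assms by (auto simp: fixed_vectors_def)

lemma unipotents_in_Kcong:
  assumes "u \<in> PF v (int n)"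
  shows "(1, u, 0, 1) \<in> Kcong v n" "(1, 0, - u, 1) \<in> Kcong v n"
  using assms by (auto simp: Kcong_def PF_minus_iff)

lemma fixed_vector_support:
  assumes "Phi \<in> fixed_vectors v e chi rho n" "Phi x \<noteq> 0" "2 * s \<le> c - int n + 1"
  shows "x \<in> PL v s"
  using assms support_of_unipotent_invariant fixed_vectorD unipotents_in_Kcong by blast

text \<open>rho w Phi is again invariant under the upper unipotents of K_n, because
  w (1, 0; -u, 1) = (1, u; 0, 1) w.\<close>
lemma fourier_support_of_fixed_vector:
  assumes fixed: "Phi \<in> fixed_vectors v e chi rho n"
    and nonzero: "fourier v q e tau lam Phi y \<noteq> 0" and s: "2 * s \<le> c - int n + 1"
  shows "y \<in> PL v s"
proof -
  define w :: "'f mat2" where "w = (0, 1, -1, 0)"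
  have w: "w \<in> Gplus e" by (rule det_one_in_Gplus) (simp add: w_def)
  have Phi: "Phi \<in> schwartz_chi v e chi" by (rule fixed_vectorD(1)[OF fixed])
  obtain gamma where gamma: "cmod gamma = 1"
    and weyl: "rho w Phi = (\<lambda>x. gamma * fourier v q e tau lam Phi (lconj x))"
    using rho_weyl Phi unfolding w_def by metis
  have "rho (1, u, 0, 1) (rho w Phi) = rho w Phi" if u: "u \<in> PF v (int n)" for u
  proof -
    have G: "(1, u, 0, 1) \<in> Gplus e" "(1, 0, - u, 1) \<in> Gplus e" by (auto intro!: det_one_in_Gplus)
    have "rho (1, u, 0, 1) (rho w Phi) = rho (mmul (1, u, 0, 1) w) Phi"
      using rho_mmul[OF G(1) w Phi] by simp
    also have "mmul (1, u, 0, 1) w = mmul w (1, 0, - u, 1)" by (simp add: w_def)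
    also have "rho \<dots> Phi = rho w (rho (1, 0, - u, 1) Phi)" by (rule rho_mmul[OF w G(2) Phi])
    also have "rho (1, 0, - u, 1) Phi = Phi" by (rule fixed_vectorD(2)[OF fixed unipotents_in_Kcong(2)[OF u]])
    finally show ?thesis .
  qed
  moreover have "rho w Phi (lconj y) \<noteq> 0" using nonzero gamma by (auto simp: weyl lconj_lconj)
  ultimately have "lconj y \<in> PL v s"
    using support_of_unipotent_invariant[OF rho_closed[OF w Phi] _ _ s] by blast
  then show ?thesis using PL_lconj lconj_lconj by metis
qed

text \<open>By Fourier inversion Phi x = F(F Phi)(-x); on the support p_L^s of F Phi the
  character of -x depends on x only modulo p_L^(c - s).\<close>
lemma fixed_vector_locally_constant:
  assumes fixed: "Phi \<in> fixed_vectors v e chi rho n" and s: "2 * s \<le> c - int n + 1"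
    and close: "lsub x x' \<in> PL v (c - s)"
  shows "Phi x = Phi x'"
proof -
  let ?F = "fourier v q e tau lam Phi"
  have "(\<lambda>y. ?F y * pairing e tau (lneg x) y) = (\<lambda>y. ?F y * pairing e tau (lneg x') y)"
  proof (rule ext)
    fix y
    show "?F y * pairing e tau (lneg x) y = ?F y * pairing e tau (lneg x') y"
    proof (cases "?F y = 0")
      case False
      then have y: "y \<in> PL v s" using fourier_support_of_fixed_vector[OF fixed _ s] by blast
      have "lsub x' x \<in> PL v (c - s)" using PL_lneg[OF close] by (simp add: lneg_def lsub_def)
      from PL_mult[OF this y] have "fst (lmul e (lsub x' x) y) \<in> PF v c"
        by (simp add: PL_def mem_Times_iff)
      moreover have "2 \<in> PF v 0" using v_two by (simp add: mem_PF_iff)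
      ultimately have "2 * fst (lmul e (lsub x' x) y) \<in> PF v (0 + c)"
        using PF_mult by blast
      then have "tau (ltr (lmul e (lsub x' x) y)) = 1" using tau_trivial_iff[of c] by (simp add: ltr_def)
      moreover have "ltr (lmul e (lneg x) y) = ltr (lmul e (lneg x') y) + ltr (lmul e (lsub x' x) y)"
        by (simp add: ltr_def lmul_def lneg_def lsub_def algebra_simps)
      ultimately show ?thesis by (simp add: pairing_def tau_add)
    qed simp
  qed
  then have "fourier v q e tau lam ?F (lneg x) = fourier v q e tau lam ?F (lneg x')"
    by (simp add: fourier_def)
  moreover have "schwartz v Phi"
    using fixed_vectorD(1)[OF fixed] by (simp add: schwartz_chi_def)
  ultimately show ?thesis by (simp add: fourier_fourier lneg_def)
qed

lemma fixed_vector_equivariant: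
  "Phi \<in> fixed_vectors v e chi rho n \<Longrightarrow> lnorm e y = 1 \<Longrightarrow>
    Phi (lmul e x y) = inverse (chi y) * Phi x"
  using fixed_vectorD(1) unfolding schwartz_chi_def by blast

lemma fixed_vectors_determined:
  assumes a: "2 * s = c - int a" "int n \<le> int a + 1"
  obtains R where "finite R" "card R \<le> q ^ a"
    "\<And>x. \<exists>k. \<exists>r\<in>R. \<forall>Phi\<in>fixed_vectors v e chi rho n. Phi x = k * Phi r"
proof -
  obtain R where R: "finite R" "card R \<le> q ^ a"
    and cover: "\<forall>x\<in>PL v s. \<exists>r\<in>R. \<exists>y. lnorm e y = 1 \<and> lsub x (lmul e r y) \<in> PL v (s + int a)"
    using orbit_cover by blast
  have s: "2 * s \<le> c - int n + 1" and cs: "c - s = s + int a" using a by linarith+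
  have "\<exists>k. \<exists>r\<in>R. \<forall>Phi\<in>fixed_vectors v e chi rho n. Phi x = k * Phi r" for x
  proof (cases "x \<in> PL v s")
    case True
    then obtain r y where "r \<in> R" "lnorm e y = 1" "lsub x (lmul e r y) \<in> PL v (c - s)"
      using cover unfolding cs by blast
    then have "\<forall>Phi\<in>fixed_vectors v e chi rho n. Phi x = inverse (chi y) * Phi r"
      using fixed_vector_locally_constant[OF _ s] fixed_vector_equivariant by simp
    then show ?thesis using \<open>r \<in> R\<close> by blast
  next
    case False
    obtain r where "r \<in> R" using cover zero_in_PL by blast
    moreover have "\<forall>Phi\<in>fixed_vectors v e chi rho n. Phi x = 0 * Phi r"
      using fixed_vector_support[OF _ _ s] False by (metis mult_zero_left)
    ultimately show ?thesis by blast
  qed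
  then show ?thesis using R that by blast
qed

end

theorem lemma8p3:
  fixes v :: "'f::field \<Rightarrow> int" and q :: nat and e :: 'f
    and tau :: "'f \<Rightarrow> complex" and c :: int
    and chi :: "'f \<times> 'f \<Rightarrow> complex" and lam :: real
    and rho :: "'f mat2 \<Rightarrow> ('f \<times> 'f \<Rightarrow> complex) \<Rightarrow> ('f \<times> 'f \<Rightarrow> complex)"
    and n :: nat
  assumes "padic_field v q"
    and "unram_param v e"
    and "additive_char_conductor v tau c"
    and "char_L v e chi"
    and "\<not> factors_through_norm e chi"
    and "selfdual_measure v q e tau lam"
    and "weil_rep v q e tau chi lam rho"
    and "1 \<le> n"
  shows "\<forall>B. finite B \<longrightarrow> B \<subseteq> fixed_vectors v e chi rho n \<longrightarrow> lin_indep_fun B \<longrightarrow>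
           card B \<le> q ^ (if even (c - int n) then n else n - 1)"
proof (intro allI impI)
  fix B assume B: "finite B" "B \<subseteq> fixed_vectors v e chi rho n" "lin_indep_fun B"
  interpret weil_representation v q e tau c chi lam rho
    using assms by unfold_locales
  define a where "a = (if even (c - int n) then n else n - 1)"
  have "even (c - int a)" "int n \<le> int a + 1"
    using assms(8) by (auto simp: a_def of_nat_diff)
  then have "2 * ((c - int a) div 2) = c - int a" "int n \<le> int a + 1" by simp_all
  then obtain R where "finite R" "card R \<le> q ^ a"
    and determined: "\<And>x. \<exists>k. \<exists>r\<in>R. \<forall>Phi\<in>fixed_vectors v e chi rho n. Phi x = k * Phi r"
    using fixed_vectors_determined by blast
  have "card B \<le> card R"
    using lin_indep_fun_card_le[OF B(1) \<open>finite R\<close> B(3)] determined B(2) by (meson subsetD)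
  with \<open>card R \<le> q ^ a\<close> show "card B \<le> q ^ (if even (c - int n) then n else n - 1)"
    by (simp add: a_def)
qed

end
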